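(* Let $V$ be an Orlicz function and $R\in(0,\infty)$. Define $\varphi_V:(-\infty,0)\times C_b(\mathbb R)\to\mathbb R$ by $\varphi_V(\alpha,\lambda):=\log\int_{\mathbb R}e^{\alpha V(x)+\lambda(x)}dx$. Then for each $\lambda\in C_b(\mathbb R)$ there exists a unique $\alpha=\alpha(\lambda)\in(-\infty,0)$ such that $$\frac{d}{d\alpha}\varphi_V(\alpha(\lambda),\lambda)=R\quad\text{and}\quad\frac{d^2}{d\alpha^2}\varphi_V(\alpha(\lambda),\lambda)\in(0,\infty).$$ Moreover, the map $\lambda\mapsto\varphi_V(\alpha(\lambda),\lambda)$ is Fréchet-differentiable on $C_b(\mathbb R)$, and $$\varphi_V(\alpha(\lambda),\lambda)-\alpha(\lambda)R=\inf_{\alpha<0}\big[\varphi_V(\alpha,\lambda)-\alpha R\big].$$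
   Context: An Orlicz function is a convex, symmetric function $V:\mathbb R\to[0,\infty)$ with $V(0)=0$ and $V(x)>0$ for $x\ne0$. $C_b(\mathbb R)$ denotes the space of bounded continuous real functions on $\mathbb R$ with the supremum norm. *)

theory Defs
  imports "HOL-Analysis.Analysis"
begin

definition orlicz :: "(real \<Rightarrow> real) \<Rightarrow> bool" where
  "orlicz V \<longleftrightarrow> convex_on UNIV V \<and> (\<forall>x. V (- x) = V x) \<and> V 0 = 0
     \<and> (\<forall>x. x \<noteq> 0 \<longrightarrow> V x > 0)"

definition phiV :: "(real \<Rightarrow> real) \<Rightarrow> real \<Rightarrow> (real \<Rightarrow>\<^sub>C real) \<Rightarrow> real" where
  "phiV V a lam = ln (\<integral>x. exp (a * V x + apply_bcontfun lam x) \<partial>lborel)"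

definition good_alpha :: "(real \<Rightarrow> real) \<Rightarrow> real \<Rightarrow> (real \<Rightarrow>\<^sub>C real) \<Rightarrow> real \<Rightarrow> bool" where
  "good_alpha V R lam a \<longleftrightarrow> a < 0
     \<and> ((\<lambda>b. phiV V b lam) has_real_derivative R) (at a)
     \<and> (\<exists>D2. D2 > 0 \<and> (deriv (\<lambda>b. phiV V b lam) has_real_derivative D2) (at a))"

definition alpha_of :: "(real \<Rightarrow> real) \<Rightarrow> real \<Rightarrow> (real \<Rightarrow>\<^sub>C real) \<Rightarrow> real" where
  "alpha_of V R lam = (THE a. good_alpha V R lam a)"

end

theory Submission
  imports Defs "HOL-Probability.Sinc_Integral"
begin

(*
  For a < 0 write I_k(a, l) = orlicz_moment V k a l for the integral of V^k exp(a V + l). An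
  Orlicz function grows at least linearly, so these integrals converge, and (a, l) |-> I_k(a, l)
  is Frechet differentiable on R x C_b(R) with a-derivative I_(k+1): the second-order Taylor
  remainder of exp is dominated by the integrable weight exp(a V / 2). Hence phi_V = ln I_0 has
  a-derivative G = I_1 / I_0 = orlicz_mean V l, the mean of V under the weight, and
  G' = (I_2 I_0 - I_1^2) / I_0^2 is a variance, hence positive. As a -> -oo the weight
  concentrates at the zero of V, so eventually G < R; as a -> 0 mass escapes to where V is large,
  so eventually G > R. Thus G(a) = R has exactly one root alpha(l), which minimises
  a |-> phi_V(a, l) - a R. Strict monotonicity of G makes alpha continuous in l, and the implicit
  function theorem applied to I_1 - R I_0 = 0, whose a-derivative I_2 - R I_1 is a multiple of the
  variance, makes it differentiable; the chain rule does the rest.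
*)

lemma abs_exp_minus_one_minus_le: "\<bar>exp d - 1 - d\<bar> \<le> d\<^sup>2 * exp \<bar>d\<bar>" for d :: real
proof -
  obtain t where t: "\<bar>t\<bar> \<le> \<bar>d\<bar>" "exp d = (\<Sum>m<2. d ^ m / fact m) + exp t / fact 2 * d ^ 2"
    using Maclaurin_exp_le[of d 2] by blast
  have "\<bar>exp d - 1 - d\<bar> = exp t / 2 * d\<^sup>2"
    using t(2) by (simp add: numeral_2_eq_2)
  also have "\<dots> \<le> exp \<bar>d\<bar> / 2 * d\<^sup>2"
    using t(1) by (intro mult_right_mono divide_right_mono) auto
  also have "\<dots> \<le> d\<^sup>2 * exp \<bar>d\<bar>"
    by simp
  finally show ?thesis .
qed

lemma exp_linearization_remainder_le:
  fixes v s \<eta> \<rho> a0 m0 M :: real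
  assumes v: "v \<ge> 0" and s: "\<bar>s\<bar> \<le> \<rho>" and \<eta>: "\<bar>\<eta>\<bar> \<le> \<rho>"
    and \<rho>: "\<rho> \<le> 1" "\<rho> \<le> - a0 / 2" and m0: "\<bar>m0\<bar> \<le> M"
  shows "\<bar>exp ((a0 + s) * v + (m0 + \<eta>)) - exp (a0 * v + m0) - (s * v + \<eta>) * exp (a0 * v + m0)\<bar>
    \<le> \<rho>\<^sup>2 * ((v + 1)\<^sup>2 * exp (M + 1) * exp (a0 / 2 * v))"
proof -
  define d where "d = s * v + \<eta>"
  have "\<bar>d\<bar> \<le> \<bar>s\<bar> * v + \<bar>\<eta>\<bar>"
    using v abs_triangle_ineq[of "s * v" \<eta>] by (simp add: d_def abs_mult)
  also have "\<dots> \<le> \<rho> * v + \<rho>"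
    using s \<eta> v by (intro add_mono mult_right_mono) auto
  finally have d_le: "\<bar>d\<bar> \<le> \<rho> * v + \<rho>" .
  then have d_sq: "d\<^sup>2 \<le> \<rho>\<^sup>2 * (v + 1)\<^sup>2"
    by (metis abs_ge_zero distrib_left mult.right_neutral power2_abs power_mono power_mult_distrib)
  have "\<rho> * v \<le> - a0 / 2 * v"
    using \<rho> v by (intro mult_right_mono)
  then have "\<bar>d\<bar> \<le> - a0 / 2 * v + 1"
    using d_le \<rho> by linarith
  then have "a0 * v + m0 + \<bar>d\<bar> \<le> M + 1 + a0 / 2 * v"
    using m0 by linarith
  then have exp_le: "exp (a0 * v + m0) * exp \<bar>d\<bar> \<le> exp (M + 1) * exp (a0 / 2 * v)"
    by (simp flip: exp_add)
  have "exp ((a0 + s) * v + (m0 + \<eta>)) = exp (a0 * v + m0) * exp d"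
    by (simp add: d_def algebra_simps flip: exp_add)
  then have "exp ((a0 + s) * v + (m0 + \<eta>)) - exp (a0 * v + m0) - d * exp (a0 * v + m0)
      = exp (a0 * v + m0) * (exp d - 1 - d)"
    by (simp add: algebra_simps)
  then have "\<bar>exp ((a0 + s) * v + (m0 + \<eta>)) - exp (a0 * v + m0) - d * exp (a0 * v + m0)\<bar>
      = exp (a0 * v + m0) * \<bar>exp d - 1 - d\<bar>"
    by (simp add: abs_mult)
  also have "\<dots> \<le> exp (a0 * v + m0) * (d\<^sup>2 * exp \<bar>d\<bar>)"
    by (intro mult_left_mono abs_exp_minus_one_minus_le) simp
  also have "\<dots> = d\<^sup>2 * (exp (a0 * v + m0) * exp \<bar>d\<bar>)"
    by simp
  also have "\<dots> \<le> \<rho>\<^sup>2 * (v + 1)\<^sup>2 * (exp (M + 1) * exp (a0 / 2 * v))"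
    by (rule mult_mono[OF d_sq exp_le]) simp_all
  finally show ?thesis
    by (simp add: d_def mult.assoc)
qed

lemma power_le_fact_mult_exp: "0 \<le> x \<Longrightarrow> x ^ n \<le> fact n * exp x" for x :: real
proof -
  assume x: "0 \<le> x"
  obtain t where "exp x = (\<Sum>m<Suc n. x ^ m / fact m) + exp t / fact (Suc n) * x ^ Suc n"
    using Maclaurin_exp_le[of x "Suc n"] by blast
  then have "(\<Sum>m<Suc n. x ^ m / fact m) \<le> exp x"
    using x by simp
  moreover have "x ^ n / fact n \<le> (\<Sum>m<Suc n. x ^ m / fact m)"
    by (rule member_le_sum[where f = "\<lambda>m. x ^ m / fact m"]) (use x in auto)
  ultimately show ?thesis
    by (simp add: field_simps)
qed

lemma integrable_exp_neg_abs:
  assumes "c > 0"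
  shows "integrable lborel (\<lambda>x::real. exp (- c * \<bar>x\<bar>))"
proof -
  define f where "f = (\<lambda>x::real. indicator {0<..} x *\<^sub>R exp (- (x * c)))"
  have f: "integrable lborel f"
    using integrable_I0i_exp_mscale[OF assms] by (simp add: f_def set_integrable_def)
  have "integrable lborel (\<lambda>x. f (1 + (-1) * x))"
    by (rule lborel_integrable_real_affine[OF f]) simp
  with f have "integrable lborel (\<lambda>x. f x + exp c * f (1 + (-1) * x))"
    by auto
  then show ?thesis
  proof (rule Bochner_Integration.integrable_bound)
    show "AE x in lborel. norm (exp (- c * \<bar>x\<bar>)) \<le> norm (f x + exp c * f (1 + (-1) * x))"
    proof (rule AE_I2)
      fix x :: real
      have "exp (- c * \<bar>x\<bar>) = exp c * exp (- ((1 - x) * c))" if "x \<le> 0"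
        using that by (simp add: algebra_simps flip: exp_add)
      then show "norm (exp (- c * \<bar>x\<bar>)) \<le> norm (f x + exp c * f (1 + (-1) * x))"
        by (cases "x > 0") (simp_all add: f_def mult.commute)
    qed
  qed measurable
qed

lemma integrable_const_indicator_Icc:
  fixes c p q :: real
  shows "integrable lborel (\<lambda>x. c * indicator {p..q} x)"
  by (intro Bochner_Integration.integrable_mult_right integrable_real_indicator)
    (auto simp: emeasure_lborel_Icc_eq)

lemma integral_pos_if_bounded_below_on_interval:
  fixes f :: "real \<Rightarrow> real"
  assumes "integrable lborel f" and "\<And>x. f x \<ge> 0" and "p < q" and "c > 0"
    and "\<And>x. p \<le> x \<Longrightarrow> x \<le> q \<Longrightarrow> f x \<ge> c"
  shows "integral\<^sup>L lborel f > 0"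
proof -
  have "(\<integral>x. c * indicator {p..q} x \<partial>lborel) \<le> integral\<^sup>L lborel f"
    using assms by (intro integral_mono[OF integrable_const_indicator_Icc assms(1)]) (auto simp: indicator_def)
  moreover have "(\<integral>x. c * indicator {p..q} x \<partial>lborel) = c * (q - p)"
    using assms(3) by simp
  ultimately show ?thesis
    using assms(3,4) by (smt (verit) mult_pos_pos)
qed

lemma has_derivative_at_if_quadratic_remainder:
  fixes f :: "'a::real_normed_vector \<Rightarrow> 'b::real_normed_vector"
  assumes "bounded_linear L" and "r > 0" and "C \<ge> 0"
    and "\<And>y. norm (y - x) < r \<Longrightarrow> norm (f y - f x - L (y - x)) \<le> C * (norm (y - x))\<^sup>2"
  shows "(f has_derivative L) (at x)"
  unfolding has_derivative_at_alt
proof (intro conjI allI impI assms(1))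
  fix e :: real
  assume e: "e > 0"
  show "\<exists>d>0. \<forall>y. norm (y - x) < d \<longrightarrow> norm (f y - f x - L (y - x)) \<le> e * norm (y - x)"
  proof (intro exI[of _ "min r (e / (C + 1))"] conjI allI impI)
    show "min r (e / (C + 1)) > 0"
      using assms e by simp
    fix y
    assume y: "norm (y - x) < min r (e / (C + 1))"
    have "C * norm (y - x) \<le> C * (e / (C + 1))"
      using y assms by (intro mult_left_mono) auto
    also have "\<dots> \<le> e"
      using assms e by (simp add: field_simps)
    finally have "C * norm (y - x) * norm (y - x) \<le> e * norm (y - x)"
      by (simp add: mult_right_mono)
    with assms(4)[of y] y show "norm (f y - f x - L (y - x)) \<le> e * norm (y - x)"
      by (simp add: power2_eq_square mult.assoc)
  qed
qed

lemma implicit_function_linearization: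
  fixes F :: "real \<times> 'a::real_normed_vector \<Rightarrow> real" and g :: "'a \<Rightarrow> real"
  assumes dF: "(F has_derivative (\<lambda>p. c * fst p + L (snd p))) (at (g x0, x0))"
    and cont: "continuous (at x0) g" and zero: "\<And>x. F (g x, x) = 0" and e: "e > 0"
  shows "\<exists>d>0. \<forall>x. norm (x - x0) < d \<longrightarrow>
    \<bar>c * (g x - g x0) + L (x - x0)\<bar> \<le> e * (\<bar>g x - g x0\<bar> + norm (x - x0))"
proof -
  obtain d1 where d1: "d1 > 0" and F_approx: "\<And>y. norm (y - (g x0, x0)) < d1 \<Longrightarrow>
      norm (F y - F (g x0, x0) - (c * fst (y - (g x0, x0)) + L (snd (y - (g x0, x0)))))
        \<le> e * norm (y - (g x0, x0))"
    using dF e unfolding has_derivative_at_alt by blast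
  obtain d2 where d2: "d2 > 0" and g_close: "\<And>x. dist x x0 < d2 \<Longrightarrow> dist (g x) (g x0) < d1 / 2"
    using cont d1 unfolding continuous_at_eps_delta by (meson half_gt_zero)
  show ?thesis
  proof (intro exI[of _ "min d2 (d1 / 2)"] conjI allI impI)
    show "min d2 (d1 / 2) > 0"
      using d1 d2 by simp
    fix x
    assume x: "norm (x - x0) < min d2 (d1 / 2)"
    have norm_le: "norm ((g x, x) - (g x0, x0)) \<le> \<bar>g x - g x0\<bar> + norm (x - x0)"
      using norm_Pair_le[of "g x - g x0" "x - x0"] by simp
    moreover have "\<bar>g x - g x0\<bar> < d1 / 2"
      using g_close[of x] x by (simp add: dist_norm dist_real_def)
    ultimately have "norm ((g x, x) - (g x0, x0)) < d1"
      using x by linarith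
    then have "\<bar>c * (g x - g x0) + L (x - x0)\<bar> \<le> e * norm ((g x, x) - (g x0, x0))"
      using F_approx[of "(g x, x)"] zero[of x] zero[of x0] by simp
    also have "\<dots> \<le> e * (\<bar>g x - g x0\<bar> + norm (x - x0))"
      using norm_le e by (intro mult_left_mono) auto
    finally show "\<bar>c * (g x - g x0) + L (x - x0)\<bar> \<le> e * (\<bar>g x - g x0\<bar> + norm (x - x0))" .
  qed
qed

lemma implicit_function_lipschitz_at:
  fixes F :: "real \<times> 'a::real_normed_vector \<Rightarrow> real" and g :: "'a \<Rightarrow> real"
  assumes dF: "(F has_derivative (\<lambda>p. c * fst p + L (snd p))) (at (g x0, x0))"
    and c: "c \<noteq> 0" and L: "bounded_linear L"
    and cont: "continuous (at x0) g" and zero: "\<And>x. F (g x, x) = 0"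
  obtains K d where "K > 0" "d > 0" "\<And>x. norm (x - x0) < d \<Longrightarrow> \<bar>g x - g x0\<bar> \<le> K * norm (x - x0)"
proof -
  obtain KL where KL: "KL > 0" "\<And>h. norm (L h) \<le> norm h * KL"
    using bounded_linear.pos_bounded[OF L] by blast
  define K where "K = 1 + 2 * KL / \<bar>c\<bar>"
  obtain d where "d > 0" and lin: "\<And>x. norm (x - x0) < d \<Longrightarrow>
      \<bar>c * (g x - g x0) + L (x - x0)\<bar> \<le> \<bar>c\<bar> / 2 * (\<bar>g x - g x0\<bar> + norm (x - x0))"
    using implicit_function_linearization[OF dF cont zero, of "\<bar>c\<bar> / 2"] c by auto
  have "\<bar>g x - g x0\<bar> \<le> K * norm (x - x0)" if "norm (x - x0) < d" for x
  proof -
    have "\<bar>c\<bar> * \<bar>g x - g x0\<bar> \<le> \<bar>c * (g x - g x0) + L (x - x0)\<bar> + \<bar>L (x - x0)\<bar>"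
      by (simp add: abs_mult[symmetric])
    also have "\<dots> \<le> \<bar>c\<bar> / 2 * (\<bar>g x - g x0\<bar> + norm (x - x0)) + norm (x - x0) * KL"
      using lin[OF that] KL(2)[of "x - x0"] by simp
    finally have "\<bar>c\<bar> / 2 * \<bar>g x - g x0\<bar> \<le> (\<bar>c\<bar> / 2 + KL) * norm (x - x0)"
      by (simp add: algebra_simps)
    then show ?thesis
      using c by (simp add: K_def field_simps)
  qed
  moreover have "K > 0"
    using c KL by (simp add: K_def add_pos_pos)
  ultimately show ?thesis
    using that \<open>d > 0\<close> by blast
qed

lemma implicit_function_has_derivative:
  fixes F :: "real \<times> 'a::real_normed_vector \<Rightarrow> real" and g :: "'a \<Rightarrow> real"
  assumes dF: "(F has_derivative (\<lambda>p. c * fst p + L (snd p))) (at (g x0, x0))"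
    and c: "c \<noteq> 0" and L: "bounded_linear L"
    and cont: "continuous (at x0) g" and zero: "\<And>x. F (g x, x) = 0"
  shows "(g has_derivative (\<lambda>h. - L h / c)) (at x0)"
  unfolding has_derivative_at_alt
proof (intro conjI allI impI)
  show "bounded_linear (\<lambda>h. - L h / c)"
    using bounded_linear_compose[OF bounded_linear_divide[of c] bounded_linear_minus[OF L]] by simp
  obtain K d1 where K: "K > 0" and "d1 > 0"
    and lipschitz: "\<And>x. norm (x - x0) < d1 \<Longrightarrow> \<bar>g x - g x0\<bar> \<le> K * norm (x - x0)"
    using implicit_function_lipschitz_at[OF assms] by blast
  fix e :: real
  assume e: "e > 0"
  obtain d2 where "d2 > 0" and lin: "\<And>x. norm (x - x0) < d2 \<Longrightarrow>
      \<bar>c * (g x - g x0) + L (x - x0)\<bar> \<le> e * \<bar>c\<bar> / (K + 1) * (\<bar>g x - g x0\<bar> + norm (x - x0))"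
    using implicit_function_linearization[OF dF cont zero, of "e * \<bar>c\<bar> / (K + 1)"] e c K by auto
  show "\<exists>d>0. \<forall>x. norm (x - x0) < d \<longrightarrow> norm (g x - g x0 - - L (x - x0) / c) \<le> e * norm (x - x0)"
  proof (intro exI[of _ "min d1 d2"] conjI allI impI)
    show "min d1 d2 > 0"
      using \<open>d1 > 0\<close> \<open>d2 > 0\<close> by simp
    fix x
    assume x: "norm (x - x0) < min d1 d2"
    have "\<bar>c * (g x - g x0) + L (x - x0)\<bar> \<le> e * \<bar>c\<bar> / (K + 1) * (K * norm (x - x0) + norm (x - x0))"
      using lin[of x] lipschitz[of x] x e K
      by (smt (verit) divide_nonneg_nonneg min_less_iff_conj mult_left_mono abs_ge_zero zero_le_mult_iff)
    also have "\<dots> = \<bar>c\<bar> * (e * norm (x - x0))"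
      using K by (simp add: field_simps)
    finally show "norm (g x - g x0 - - L (x - x0) / c) \<le> e * norm (x - x0)"
      using c by (simp add: field_simps abs_mult[symmetric])
  qed
qed

section \<open>Orlicz functions and the moments I_k\<close>

lemma borel_measurable_apply_bcontfun [measurable]:
  "apply_bcontfun f \<in> borel_measurable borel"
  by (rule borel_measurable_continuous_onI) simp

lemma abs_apply_bcontfun_le: "\<bar>apply_bcontfun f x\<bar> \<le> norm f"
  using norm_bounded[of f x] by simp

definition orlicz_moment :: "(real \<Rightarrow> real) \<Rightarrow> nat \<Rightarrow> real \<Rightarrow> (real \<Rightarrow>\<^sub>C real) \<Rightarrow> real" where
  "orlicz_moment V k a l = (\<integral>x. V x ^ k * exp (a * V x + apply_bcontfun l x) \<partial>lborel)"

definition orlicz_moment_dir ::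
    "(real \<Rightarrow> real) \<Rightarrow> nat \<Rightarrow> real \<Rightarrow> (real \<Rightarrow>\<^sub>C real) \<Rightarrow> (real \<Rightarrow>\<^sub>C real) \<Rightarrow> real" where
  "orlicz_moment_dir V k a l h =
    (\<integral>x. V x ^ k * apply_bcontfun h x * exp (a * V x + apply_bcontfun l x) \<partial>lborel)"

definition orlicz_mean :: "(real \<Rightarrow> real) \<Rightarrow> (real \<Rightarrow>\<^sub>C real) \<Rightarrow> real \<Rightarrow> real" where
  "orlicz_mean V l a = orlicz_moment V 1 a l / orlicz_moment V 0 a l"

locale orlicz_function =
  fixes V :: "real \<Rightarrow> real"
  assumes orlicz: "orlicz V"
begin

lemma V_convex: "convex_on UNIV V"
  using orlicz by (simp add: orlicz_def)

lemma V_zero [simp]: "V 0 = 0"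
  using orlicz by (simp add: orlicz_def)

lemma V_minus [simp]: "V (- x) = V x"
  using orlicz by (simp add: orlicz_def)

lemma V_pos: "x \<noteq> 0 \<Longrightarrow> V x > 0"
  using orlicz by (simp add: orlicz_def)

lemma V_nonneg [simp]: "V x \<ge> 0"
  using V_pos[of x] by (cases "x = 0") auto

lemma V_one_pos: "V 1 > 0"
  by (rule V_pos) simp

lemma V_abs [simp]: "V \<bar>x\<bar> = V x"
  by (cases "x \<ge> 0") auto

lemma V_scale_le: "0 \<le> t \<Longrightarrow> t \<le> 1 \<Longrightarrow> V (t * y) \<le> t * V y"
  using convex_onD[OF V_convex, of t 0 y] by simp

lemma V_mono: assumes "0 \<le> x" "x \<le> y" shows "V x \<le> V y"
proof (cases "y = 0")
  case False
  then have "V ((x / y) * y) \<le> (x / y) * V y"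
    using assms by (intro V_scale_le) auto
  also have "\<dots> \<le> V y"
    using assms False by (intro mult_left_le_one_le) auto
  finally show ?thesis
    using False by simp
qed (use assms in simp)

lemma V_ge_linear: "V 1 * (\<bar>x\<bar> - 1) \<le> V x"
proof (cases "\<bar>x\<bar> \<ge> 1")
  case True
  have "V 1 = V ((1 / \<bar>x\<bar>) * \<bar>x\<bar>)"
    using True by simp
  also have "\<dots> \<le> (1 / \<bar>x\<bar>) * V \<bar>x\<bar>"
    using True by (intro V_scale_le) auto
  finally have "\<bar>x\<bar> * V 1 \<le> V x"
    using True by (simp add: field_simps)
  then show ?thesis
    using V_one_pos by (simp add: algebra_simps)
next
  case False
  then show ?thesis
    using V_one_pos V_nonneg[of x] by (smt (verit) mult_pos_neg)
qed

lemma V_le_linear: "\<bar>x\<bar> \<le> 1 \<Longrightarrow> V x \<le> \<bar>x\<bar> * V 1"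
  using V_scale_le[of "\<bar>x\<bar>" 1] by simp

lemma V_continuous: "continuous_on UNIV V"
  by (rule convex_on_continuous[OF _ V_convex]) simp

lemma V_measurable [measurable]: "V \<in> borel_measurable borel"
  by (rule borel_measurable_continuous_onI[OF V_continuous])

lemma integrable_V_power_exp:
  assumes "\<beta> < 0"
  shows "integrable lborel (\<lambda>x. V x ^ n * exp (\<beta> * V x))"
proof -
  define g where "g = - \<beta> / 2"
  have g: "g > 0"
    using assms by (simp add: g_def)
  define C where "C = fact n / g ^ n * exp (g * V 1)"
  have "integrable lborel (\<lambda>x. C * exp (- (g * V 1) * \<bar>x\<bar>))"
    using integrable_exp_neg_abs[of "g * V 1"] g V_one_pos by simp
  then show ?thesis
  proof (rule Bochner_Integration.integrable_bound)
    show "AE x in lborel. norm (V x ^ n * exp (\<beta> * V x)) \<le> norm (C * exp (- (g * V 1) * \<bar>x\<bar>))"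
    proof (rule AE_I2)
      fix x
      have "(g * V x) ^ n \<le> fact n * exp (g * V x)"
        using g by (intro power_le_fact_mult_exp) simp
      then have "V x ^ n \<le> fact n / g ^ n * exp (g * V x)"
        using g by (simp add: power_mult_distrib field_simps)
      then have "V x ^ n * exp (\<beta> * V x) \<le> fact n / g ^ n * exp (g * V x) * exp (\<beta> * V x)"
        by (rule mult_right_mono) simp
      also have "\<dots> = fact n / g ^ n * exp (- g * V x)"
        by (simp add: g_def mult.assoc flip: exp_add)
      also have "\<dots> \<le> fact n / g ^ n * exp (- g * (V 1 * (\<bar>x\<bar> - 1)))"
        using V_ge_linear[of x] g by (intro mult_left_mono) auto
      also have "\<dots> = C * exp (- (g * V 1) * \<bar>x\<bar>)"
        by (simp add: C_def algebra_simps flip: exp_add)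
      finally show "norm (V x ^ n * exp (\<beta> * V x)) \<le> norm (C * exp (- (g * V 1) * \<bar>x\<bar>))"
        using g by (simp add: C_def)
    qed
  qed measurable
qed

lemma integrable_moment_integrand:
  assumes "a < 0"
  shows "integrable lborel (\<lambda>x. V x ^ k * exp (a * V x + apply_bcontfun l x))"
proof -
  have "integrable lborel (\<lambda>x. exp (norm l) * (V x ^ k * exp (a * V x)))"
    using integrable_V_power_exp[OF assms] by simp
  then show ?thesis
  proof (rule Bochner_Integration.integrable_bound)
    show "AE x in lborel. norm (V x ^ k * exp (a * V x + apply_bcontfun l x))
        \<le> norm (exp (norm l) * (V x ^ k * exp (a * V x)))"
    proof (rule AE_I2)
      fix x
      have "exp (a * V x + apply_bcontfun l x) \<le> exp (norm l) * exp (a * V x)"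
        using abs_apply_bcontfun_le[of l x] by (simp add: mult.commute flip: exp_add)
      then have "V x ^ k * exp (a * V x + apply_bcontfun l x) \<le> V x ^ k * (exp (norm l) * exp (a * V x))"
        by (rule mult_left_mono) simp
      then show "norm (V x ^ k * exp (a * V x + apply_bcontfun l x))
          \<le> norm (exp (norm l) * (V x ^ k * exp (a * V x)))"
        by (simp add: mult.left_commute)
    qed
  qed measurable
qed

lemma abs_moment_dir_integrand_le:
  "\<bar>V x ^ k * apply_bcontfun h x * exp (a * V x + apply_bcontfun l x)\<bar>
    \<le> norm h * (V x ^ k * exp (a * V x + apply_bcontfun l x))"
proof -
  have "\<bar>apply_bcontfun h x\<bar> * (V x ^ k * exp (a * V x + apply_bcontfun l x))
      \<le> norm h * (V x ^ k * exp (a * V x + apply_bcontfun l x))"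
    using abs_apply_bcontfun_le[of h x] by (rule mult_right_mono) simp
  then show ?thesis
    by (simp add: abs_mult ac_simps)
qed

lemma integrable_moment_dir_integrand:
  assumes "a < 0"
  shows "integrable lborel (\<lambda>x. V x ^ k * apply_bcontfun h x * exp (a * V x + apply_bcontfun l x))"
proof (rule Bochner_Integration.integrable_bound)
  show "integrable lborel (\<lambda>x. norm h * (V x ^ k * exp (a * V x + apply_bcontfun l x)))"
    using integrable_moment_integrand[OF assms] by simp
  show "AE x in lborel. norm (V x ^ k * apply_bcontfun h x * exp (a * V x + apply_bcontfun l x))
      \<le> norm (norm h * (V x ^ k * exp (a * V x + apply_bcontfun l x)))"
    using abs_moment_dir_integrand_le by (intro AE_I2) simp
qed measurable

lemma bounded_linear_orlicz_moment_dir: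
  assumes "a < 0"
  shows "bounded_linear (orlicz_moment_dir V k a l)"
proof (rule bounded_linear_intro[where K = "orlicz_moment V k a l"])
  fix h h' :: "real \<Rightarrow>\<^sub>C real"
  show "orlicz_moment_dir V k a l (h + h') = orlicz_moment_dir V k a l h + orlicz_moment_dir V k a l h'"
    unfolding orlicz_moment_dir_def
    using integrable_moment_dir_integrand[OF assms, of k h l] integrable_moment_dir_integrand[OF assms, of k h' l]
    by (simp add: distrib_left distrib_right flip: integral_add)
next
  fix r h
  show "orlicz_moment_dir V k a l (r *\<^sub>R h) = r *\<^sub>R orlicz_moment_dir V k a l h"
    unfolding orlicz_moment_dir_def by (simp add: mult.assoc mult.left_commute flip: integral_mult_right_zero)
next
  fix h
  have "\<bar>orlicz_moment_dir V k a l h\<bar>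
      \<le> (\<integral>x. norm h * (V x ^ k * exp (a * V x + apply_bcontfun l x)) \<partial>lborel)"
    unfolding orlicz_moment_dir_def
    using integrable_moment_integrand[OF assms, of k l] integrable_moment_dir_integrand[OF assms, of k h l]
      abs_moment_dir_integrand_le
    by (intro integral_abs_bound_integral) auto
  then show "norm (orlicz_moment_dir V k a l h) \<le> norm h * orlicz_moment V k a l"
    by (simp add: orlicz_moment_def)
qed

lemma orlicz_moment_remainder_eq:
  assumes "a < 0" and "a0 < 0"
  shows "orlicz_moment V k a l - orlicz_moment V k a0 l0
      - ((a - a0) * orlicz_moment V (Suc k) a0 l0 + orlicz_moment_dir V k a0 l0 (l - l0))
    = (\<integral>x. V x ^ k * (exp (a * V x + apply_bcontfun l x) - exp (a0 * V x + apply_bcontfun l0 x)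
        - ((a - a0) * V x + (apply_bcontfun l x - apply_bcontfun l0 x))
          * exp (a0 * V x + apply_bcontfun l0 x)) \<partial>lborel)"
proof -
  note integrable = integrable_moment_integrand[OF assms(1), of k l]
    integrable_moment_integrand[OF assms(2), of k l0]
    integrable_moment_integrand[OF assms(2), of "Suc k" l0]
    integrable_moment_dir_integrand[OF assms(2), of k "l - l0" l0]
  have "(\<lambda>x. V x ^ k * (exp (a * V x + apply_bcontfun l x) - exp (a0 * V x + apply_bcontfun l0 x)
        - ((a - a0) * V x + (apply_bcontfun l x - apply_bcontfun l0 x))
          * exp (a0 * V x + apply_bcontfun l0 x)))
    = (\<lambda>x. V x ^ k * exp (a * V x + apply_bcontfun l x) - V x ^ k * exp (a0 * V x + apply_bcontfun l0 x)
        - ((a - a0) * (V x ^ Suc k * exp (a0 * V x + apply_bcontfun l0 x))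
          + V x ^ k * apply_bcontfun (l - l0) x * exp (a0 * V x + apply_bcontfun l0 x)))"
    by (simp add: fun_eq_iff algebra_simps)
  then show ?thesis
    using integrable by (simp add: orlicz_moment_def orlicz_moment_dir_def)
qed

lemma orlicz_moment_remainder_le:
  assumes a0: "a0 < 0" and a_close: "\<bar>a - a0\<bar> \<le> \<rho>" and l_close: "norm (l - l0) \<le> \<rho>"
    and \<rho>: "\<rho> \<le> 1" "\<rho> \<le> - a0 / 2"
  shows "\<bar>orlicz_moment V k a l - orlicz_moment V k a0 l0
      - ((a - a0) * orlicz_moment V (Suc k) a0 l0 + orlicz_moment_dir V k a0 l0 (l - l0))\<bar>
    \<le> \<rho>\<^sup>2 * (\<integral>x. V x ^ k * ((V x + 1)\<^sup>2 * exp (norm l0 + 1) * exp (a0 / 2 * V x)) \<partial>lborel)"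
proof -
  define B where "B = (\<lambda>x. V x ^ k * ((V x + 1)\<^sup>2 * exp (norm l0 + 1) * exp (a0 / 2 * V x)))"
  have "integrable lborel (\<lambda>x. exp (norm l0 + 1) * (V x ^ (k + 2) * exp (a0 / 2 * V x)
      + 2 * (V x ^ (k + 1) * exp (a0 / 2 * V x)) + V x ^ k * exp (a0 / 2 * V x)))"
    using a0 by (intro Bochner_Integration.integrable_add Bochner_Integration.integrable_mult_right
        integrable_V_power_exp) simp_all
  moreover have "B = (\<lambda>x. exp (norm l0 + 1) * (V x ^ (k + 2) * exp (a0 / 2 * V x)
      + 2 * (V x ^ (k + 1) * exp (a0 / 2 * V x)) + V x ^ k * exp (a0 / 2 * V x)))"
    by (simp add: B_def fun_eq_iff power2_eq_square algebra_simps)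
  ultimately have B: "integrable lborel B"
    by simp
  have a: "a < 0"
    using a_close \<rho> a0 by linarith
  define rem where "rem = (\<lambda>x. V x ^ k * (exp (a * V x + apply_bcontfun l x)
      - exp (a0 * V x + apply_bcontfun l0 x) - ((a - a0) * V x + (apply_bcontfun l x - apply_bcontfun l0 x))
        * exp (a0 * V x + apply_bcontfun l0 x)))"
  have rem_le: "\<bar>rem x\<bar> \<le> \<rho>\<^sup>2 * B x" for x
  proof -
    have "\<bar>apply_bcontfun l x - apply_bcontfun l0 x\<bar> \<le> \<rho>"
      using abs_apply_bcontfun_le[of "l - l0" x] l_close by simp
    then have "\<bar>exp (a * V x + apply_bcontfun l x) - exp (a0 * V x + apply_bcontfun l0 x)
        - ((a - a0) * V x + (apply_bcontfun l x - apply_bcontfun l0 x))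
          * exp (a0 * V x + apply_bcontfun l0 x)\<bar>
        \<le> \<rho>\<^sup>2 * ((V x + 1)\<^sup>2 * exp (norm l0 + 1) * exp (a0 / 2 * V x))"
      using exp_linearization_remainder_le[of "V x" "a - a0" \<rho> "apply_bcontfun l x - apply_bcontfun l0 x"
          a0 "apply_bcontfun l0 x" "norm l0"] a_close \<rho> abs_apply_bcontfun_le[of l0 x]
      by simp
    then show ?thesis
      by (simp add: rem_def B_def abs_mult mult_left_mono mult.left_commute)
  qed
  have "integrable lborel rem"
  proof (rule Bochner_Integration.integrable_bound[of _ "\<lambda>x. \<rho>\<^sup>2 * B x"])
    show "AE x in lborel. norm (rem x) \<le> norm (\<rho>\<^sup>2 * B x)"
      using rem_le by (intro AE_I2) (smt (verit) real_norm_def)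
  qed (use B in \<open>simp_all add: rem_def\<close>)
  then have "\<bar>orlicz_moment V k a l - orlicz_moment V k a0 l0
      - ((a - a0) * orlicz_moment V (Suc k) a0 l0 + orlicz_moment_dir V k a0 l0 (l - l0))\<bar>
      \<le> (\<integral>x. \<rho>\<^sup>2 * B x \<partial>lborel)"
    unfolding orlicz_moment_remainder_eq[OF a a0] rem_def[symmetric]
    by (rule integral_abs_bound_integral[OF _ _ rem_le]) (use B in simp)
  then show ?thesis
    by (simp add: B_def)
qed

lemma orlicz_moment_has_derivative:
  assumes a0: "a0 < 0"
  shows "((\<lambda>p. orlicz_moment V k (fst p) (snd p)) has_derivative
     (\<lambda>p. fst p * orlicz_moment V (Suc k) a0 l0 + orlicz_moment_dir V k a0 l0 (snd p))) (at (a0, l0))"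
proof -
  define C where "C = (\<integral>x. V x ^ k * ((V x + 1)\<^sup>2 * exp (norm l0 + 1) * exp (a0 / 2 * V x)) \<partial>lborel)"
  have "C \<ge> 0"
    unfolding C_def by (intro Bochner_Integration.integral_nonneg) simp
  have "bounded_linear (\<lambda>p::real \<times> (real \<Rightarrow>\<^sub>C real).
      fst p * orlicz_moment V (Suc k) a0 l0 + orlicz_moment_dir V k a0 l0 (snd p))"
    by (intro bounded_linear_add bounded_linear_compose[OF bounded_linear_mult_left bounded_linear_fst]
        bounded_linear_compose[OF bounded_linear_orlicz_moment_dir[OF a0] bounded_linear_snd])
  then show ?thesis
  proof (rule has_derivative_at_if_quadratic_remainder[OF _ _ \<open>C \<ge> 0\<close>])
    show "min 1 (- a0 / 2) > 0"
      using a0 by simp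
    fix y :: "real \<times> (real \<Rightarrow>\<^sub>C real)"
    assume y: "norm (y - (a0, l0)) < min 1 (- a0 / 2)"
    obtain a l where y_eq: "y = (a, l)"
      by (cases y)
    have "\<bar>a - a0\<bar> \<le> norm (y - (a0, l0))" "norm (l - l0) \<le> norm (y - (a0, l0))"
      using norm_fst_le[of "a - a0" "l - l0"] norm_snd_le[of "l - l0" "a - a0"] by (simp_all add: y_eq)
    from orlicz_moment_remainder_le[OF a0 this] y
    show "norm (orlicz_moment V k (fst y) (snd y) - orlicz_moment V k (fst (a0, l0)) (snd (a0, l0))
        - (fst (y - (a0, l0)) * orlicz_moment V (Suc k) a0 l0 + orlicz_moment_dir V k a0 l0 (snd (y - (a0, l0)))))
        \<le> C * (norm (y - (a0, l0)))\<^sup>2"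
      by (simp add: y_eq C_def mult.commute)
  qed
qed

lemma orlicz_moment_has_real_derivative:
  assumes "a < 0"
  shows "((\<lambda>b. orlicz_moment V k b l) has_real_derivative orlicz_moment V (Suc k) a l) (at a)"
proof -
  have "((\<lambda>p. orlicz_moment V k (fst p) (snd p)) \<circ> (\<lambda>b. (b, l)) has_derivative
      (\<lambda>p. fst p * orlicz_moment V (Suc k) a l + orlicz_moment_dir V k a l (snd p)) \<circ> (\<lambda>s. (s, 0))) (at a)"
    by (intro diff_chain_at has_derivative_Pair has_derivative_ident has_derivative_const
        orlicz_moment_has_derivative[OF assms, simplified])
  moreover have "orlicz_moment_dir V k a l 0 = 0"
    by (simp add: orlicz_moment_dir_def)
  ultimately show ?thesis
    by (intro has_derivative_imp_has_field_derivative[where D = "\<lambda>s. s * orlicz_moment V (Suc k) a l"])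
      (simp_all add: o_def)
qed

lemma isCont_orlicz_moment_lam:
  assumes "a < 0"
  shows "isCont (\<lambda>l. orlicz_moment V k a l) l0"
proof -
  have "isCont (\<lambda>p. orlicz_moment V k (fst p) (snd p)) (a, l0)"
    by (rule has_derivative_continuous[OF orlicz_moment_has_derivative[OF assms]])
  moreover have "isCont (\<lambda>l. (a, l)) l0"
    by (intro continuous_intros)
  ultimately show ?thesis
    using isCont_o2 by fastforce
qed

lemma orlicz_moment_zero_pos:
  assumes "a < 0"
  shows "orlicz_moment V 0 a l > 0"
  unfolding orlicz_moment_def
proof (rule integral_pos_if_bounded_below_on_interval[of _ 0 1 "exp (a * V 1 - norm l)"])
  fix x :: real
  assume "0 \<le> x" "x \<le> 1"
  then have "a * V 1 \<le> a * V x"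
    using V_mono assms by (simp add: mult_left_mono_neg)
  moreover have "- norm l \<le> apply_bcontfun l x"
    using abs_apply_bcontfun_le[of l x] by linarith
  ultimately show "exp (a * V 1 - norm l) \<le> V x ^ 0 * exp (a * V x + apply_bcontfun l x)"
    by simp
qed (use integrable_moment_integrand[OF assms, of 0 l] in auto)

lemma orlicz_moment_one_pos:
  assumes "a < 0"
  shows "orlicz_moment V 1 a l > 0"
  unfolding orlicz_moment_def
proof (rule integral_pos_if_bounded_below_on_interval[of _ 1 2 "V 1 * exp (a * V 2 - norm l)"])
  fix x :: real
  assume x: "1 \<le> x" "x \<le> 2"
  then have "a * V 2 \<le> a * V x"
    using V_mono[of x 2] assms by (simp add: mult_left_mono_neg)
  moreover have "- norm l \<le> apply_bcontfun l x"
    using abs_apply_bcontfun_le[of l x] by linarith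
  ultimately have "exp (a * V 2 - norm l) \<le> exp (a * V x + apply_bcontfun l x)"
    by simp
  moreover have "V 1 \<le> V x"
    using V_mono[of 1 x] x by simp
  ultimately show "V 1 * exp (a * V 2 - norm l) \<le> V x ^ 1 * exp (a * V x + apply_bcontfun l x)"
    by (simp add: mult_mono)
qed (use integrable_moment_integrand[OF assms, of 1 l] V_one_pos in auto)

lemma orlicz_moment_centered_square:
  assumes "a < 0"
  shows "integrable lborel (\<lambda>x. (V x - m)\<^sup>2 * exp (a * V x + apply_bcontfun l x))"
    and "(\<integral>x. (V x - m)\<^sup>2 * exp (a * V x + apply_bcontfun l x) \<partial>lborel)
      = orlicz_moment V 2 a l - 2 * m * orlicz_moment V 1 a l + m\<^sup>2 * orlicz_moment V 0 a l"
proof -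
  let ?E = "\<lambda>x. exp (a * V x + apply_bcontfun l x)"
  have eq: "(\<lambda>x. (V x - m)\<^sup>2 * ?E x)
      = (\<lambda>x. V x ^ 2 * ?E x - 2 * m * (V x ^ 1 * ?E x) + m\<^sup>2 * (V x ^ 0 * ?E x))"
    by (simp add: fun_eq_iff power2_eq_square algebra_simps)
  note integrable = integrable_moment_integrand[OF assms, of 0 l]
    integrable_moment_integrand[OF assms, of 1 l] integrable_moment_integrand[OF assms, of 2 l]
  show "integrable lborel (\<lambda>x. (V x - m)\<^sup>2 * ?E x)"
    unfolding eq using integrable by (intro Bochner_Integration.integrable_add
        Bochner_Integration.integrable_diff Bochner_Integration.integrable_mult_right) auto
  show "(\<integral>x. (V x - m)\<^sup>2 * ?E x \<partial>lborel)
      = orlicz_moment V 2 a l - 2 * m * orlicz_moment V 1 a l + m\<^sup>2 * orlicz_moment V 0 a l"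
    unfolding eq using integrable by (simp add: orlicz_moment_def)
qed

text \<open>Near 0 the function V stays below half its mean m, so (V - m)^2 is not a.e. zero.\<close>

lemma orlicz_moment_variance_pos:
  assumes a: "a < 0"
  shows "orlicz_moment V 2 a l * orlicz_moment V 0 a l - (orlicz_moment V 1 a l)\<^sup>2 > 0"
proof -
  define m where "m = orlicz_moment V 1 a l / orlicz_moment V 0 a l"
  have I0: "orlicz_moment V 0 a l > 0"
    using orlicz_moment_zero_pos[OF a] .
  have m: "m > 0"
    using I0 orlicz_moment_one_pos[OF a] by (simp add: m_def)
  define \<delta> where "\<delta> = min 1 (m / (2 * V 1))"
  have \<delta>: "\<delta> > 0" "\<delta> \<le> 1" "\<delta> * V 1 \<le> m / 2"
    using m V_one_pos by (auto simp: \<delta>_def min_def field_simps)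
  have "(\<integral>x. (V x - m)\<^sup>2 * exp (a * V x + apply_bcontfun l x) \<partial>lborel) > 0"
  proof (rule integral_pos_if_bounded_below_on_interval[OF orlicz_moment_centered_square(1)[OF a] _ \<delta>(1)])
    fix x :: real
    assume x: "0 \<le> x" "x \<le> \<delta>"
    have "V x \<le> \<delta> * V 1"
      using V_le_linear[of x] x \<delta> V_one_pos by (smt (verit) abs_of_nonneg mult_right_mono)
    then have Vx: "V x \<le> m / 2"
      using \<delta> by linarith
    then have "(m / 2)\<^sup>2 \<le> (m - V x)\<^sup>2"
      using m by (intro power_mono) auto
    then have "(m / 2)\<^sup>2 \<le> (V x - m)\<^sup>2"
      by (simp add: power2_commute)
    moreover have "exp (a * (m / 2) - norm l) \<le> exp (a * V x + apply_bcontfun l x)"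
    proof -
      have "a * (m / 2) \<le> a * V x"
        using Vx a by (simp add: mult_left_mono_neg)
      then show ?thesis
        using abs_apply_bcontfun_le[of l x] by simp
    qed
    ultimately show "m\<^sup>2 / 4 * exp (a * (m / 2) - norm l) \<le> (V x - m)\<^sup>2 * exp (a * V x + apply_bcontfun l x)"
      by (intro mult_mono) (auto simp: power_divide)
  qed (use m in simp_all)
  then have "(orlicz_moment V 2 a l - 2 * m * orlicz_moment V 1 a l + m\<^sup>2 * orlicz_moment V 0 a l)
      * orlicz_moment V 0 a l > 0"
    using I0 by (simp add: orlicz_moment_centered_square(2)[OF a])
  then show ?thesis
    using I0 by (simp add: m_def power2_eq_square field_simps)
qed

lemma phiV_eq_ln_orlicz_moment: "phiV V a l = ln (orlicz_moment V 0 a l)"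
  by (simp add: phiV_def orlicz_moment_def)

lemma phiV_has_real_derivative:
  assumes "a < 0"
  shows "((\<lambda>b. phiV V b l) has_real_derivative orlicz_mean V l a) (at a)"
  using DERIV_chain2[OF DERIV_ln_divide[OF orlicz_moment_zero_pos[OF assms]]
      orlicz_moment_has_real_derivative[OF assms, of 0 l]]
  by (simp add: phiV_eq_ln_orlicz_moment orlicz_mean_def)

section \<open>The mean G and the equation G(a) = R\<close>

lemma orlicz_mean_has_real_derivative:
  assumes "a < 0"
  shows "(orlicz_mean V l has_real_derivative
    (orlicz_moment V 2 a l * orlicz_moment V 0 a l - (orlicz_moment V 1 a l)\<^sup>2) / (orlicz_moment V 0 a l)\<^sup>2) (at a)"
proof -
  have "((\<lambda>b. orlicz_moment V 1 b l / orlicz_moment V 0 b l) has_real_derivative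
      (orlicz_moment V 2 a l * orlicz_moment V 0 a l - orlicz_moment V 1 a l * orlicz_moment V 1 a l)
        / (orlicz_moment V 0 a l * orlicz_moment V 0 a l)) (at a)"
    using orlicz_moment_has_real_derivative[OF assms, of 1 l] orlicz_moment_has_real_derivative[OF assms, of 0 l]
      orlicz_moment_zero_pos[OF assms, of l]
    by (intro DERIV_divide) (simp_all add: numeral_2_eq_2)
  then show ?thesis
    by (simp add: orlicz_mean_def[abs_def] power2_eq_square)
qed

lemma orlicz_mean_derivative_pos:
  "a < 0 \<Longrightarrow> (orlicz_moment V 2 a l * orlicz_moment V 0 a l - (orlicz_moment V 1 a l)\<^sup>2) / (orlicz_moment V 0 a l)\<^sup>2 > 0"
  using orlicz_moment_variance_pos[of a l] orlicz_moment_zero_pos[of a l] by simp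

lemma orlicz_mean_strict_mono:
  assumes "a < b" and "b < 0"
  shows "orlicz_mean V l a < orlicz_mean V l b"
proof (rule DERIV_pos_imp_increasing[OF assms(1)])
  fix x
  assume "a \<le> x" "x \<le> b"
  then have "x < 0"
    using assms by simp
  then show "\<exists>y. (orlicz_mean V l has_real_derivative y) (at x) \<and> y > 0"
    using orlicz_mean_has_real_derivative orlicz_mean_derivative_pos by blast
qed

lemma continuous_on_orlicz_mean: "continuous_on {..<0} (orlicz_mean V l)"
  using orlicz_mean_has_real_derivative
  by (intro DERIV_continuous_on) (auto intro: has_field_derivative_at_within)

lemma isCont_orlicz_mean_lam:
  assumes "a < 0"
  shows "isCont (\<lambda>l. orlicz_mean V l a) l0"
  unfolding orlicz_mean_def using orlicz_moment_zero_pos[OF assms, of l0]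
  by (intro continuous_intros isCont_orlicz_moment_lam assms) simp

lemma orlicz_moment_excess:
  assumes "a < 0"
  shows "integrable lborel (\<lambda>x. (V x - R) * exp (a * V x + apply_bcontfun l x))"
    and "orlicz_moment V 1 a l - R * orlicz_moment V 0 a l
      = (\<integral>x. (V x - R) * exp (a * V x + apply_bcontfun l x) \<partial>lborel)"
proof -
  let ?E = "\<lambda>x. exp (a * V x + apply_bcontfun l x)"
  have eq: "(\<lambda>x. (V x - R) * ?E x) = (\<lambda>x. V x ^ 1 * ?E x - R * (V x ^ 0 * ?E x))"
    by (simp add: fun_eq_iff algebra_simps)
  note integrable = integrable_moment_integrand[OF assms, of 0 l] integrable_moment_integrand[OF assms, of 1 l]
  show "integrable lborel (\<lambda>x. (V x - R) * ?E x)"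
    unfolding eq using integrable by (intro Bochner_Integration.integrable_diff
        Bochner_Integration.integrable_mult_right) auto
  show "orlicz_moment V 1 a l - R * orlicz_moment V 0 a l = (\<integral>x. (V x - R) * ?E x \<partial>lborel)"
    unfolding eq using integrable by (simp add: orlicz_moment_def)
qed

lemma orlicz_mean_less_iff:
  assumes "a < 0"
  shows "orlicz_mean V l a < R \<longleftrightarrow> (\<integral>x. (V x - R) * exp (a * V x + apply_bcontfun l x) \<partial>lborel) < 0"
proof -
  have "orlicz_mean V l a < R \<longleftrightarrow> orlicz_moment V 1 a l < R * orlicz_moment V 0 a l"
    using orlicz_moment_zero_pos[OF assms, of l] by (simp add: orlicz_mean_def divide_less_eq)
  then show ?thesis
    using orlicz_moment_excess(2)[OF assms, where R = R and l = l] by linarith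
qed

lemma orlicz_mean_greater_iff:
  assumes "a < 0"
  shows "orlicz_mean V l a > R \<longleftrightarrow> (\<integral>x. (V x - R) * exp (a * V x + apply_bcontfun l x) \<partial>lborel) > 0"
proof -
  have "orlicz_mean V l a > R \<longleftrightarrow> orlicz_moment V 1 a l > R * orlicz_moment V 0 a l"
    using orlicz_moment_zero_pos[OF assms, of l] by (simp add: orlicz_mean_def less_divide_eq)
  then show ?thesis
    using orlicz_moment_excess(2)[OF assms, where R = R and l = l] by linarith
qed

lemma orlicz_excess_integrand_ge_step:
  assumes a: "a < 0" and R: "R > 0" and aVK: "a * V K = -1" and BA: "0 \<le> B" "B < A"
    and V_gt: "\<And>x. B < \<bar>x\<bar> \<Longrightarrow> R < V x" and V_ge: "\<And>x. A \<le> \<bar>x\<bar> \<Longrightarrow> 2 * R \<le> V x"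
  shows "- R * exp (norm l) * indicator {-B..B} x + R * exp (- norm l - 1) * indicator {A..K} x
    \<le> (V x - R) * exp (a * V x + apply_bcontfun l x)"
proof -
  have l_bound: "- norm l \<le> apply_bcontfun l x" "apply_bcontfun l x \<le> norm l"
    using abs_apply_bcontfun_le[of l x] by linarith+
  consider "A \<le> x \<and> x \<le> K" | "- B \<le> x \<and> x \<le> B" | "B < \<bar>x\<bar> \<and> \<not> (A \<le> x \<and> x \<le> K)"
    by linarith
  then show ?thesis
  proof cases
    case 1
    have "a * V K \<le> a * V x"
      using 1 BA V_mono[of x K] a by (simp add: mult_left_mono_neg)
    then have "exp (- norm l - 1) \<le> exp (a * V x + apply_bcontfun l x)"
      using aVK l_bound by simp
    moreover have "R \<le> V x - R"
      using V_ge[of x] 1 BA by simp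
    ultimately have "R * exp (- norm l - 1) \<le> (V x - R) * exp (a * V x + apply_bcontfun l x)"
      using R by (intro mult_mono) auto
    then show ?thesis
      using 1 BA by (simp add: indicator_def)
  next
    case 2
    have "a * V x \<le> 0"
      using a by (simp add: mult_nonpos_nonneg)
    then have "R * exp (a * V x + apply_bcontfun l x) \<le> R * exp (norm l)"
      using R l_bound by simp
    moreover have "- R * exp (a * V x + apply_bcontfun l x) \<le> (V x - R) * exp (a * V x + apply_bcontfun l x)"
      by (intro mult_right_mono) auto
    ultimately show ?thesis
      using 2 BA by (simp add: indicator_def)
  next
    case 3
    then have "0 \<le> (V x - R) * exp (a * V x + apply_bcontfun l x)"
      using V_gt[of x] by simp
    moreover have "x \<notin> {-B..B}" "x \<notin> {A..K}"
      using 3 by auto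
    ultimately show ?thesis
      by simp
  qed
qed

text \<open>For a close to 0 the weight exp(a V) is nearly flat on a long interval where V \<ge> 2 R,
  which outweighs the bounded region where V < R.\<close>

lemma exists_orlicz_mean_greater:
  assumes R: "R > 0"
  shows "\<exists>a<0. orlicz_mean V l a > R"
proof -
  define M where "M = norm l"
  define B where "B = R / V 1 + 1"
  define A where "A = 2 * R / V 1 + 1"
  define K where "K = A + 2 * B * exp (2 * M + 1) + 1"
  have BA: "0 \<le> B" "B < A" and AK: "A < K"
    using R V_one_pos by (simp_all add: A_def B_def K_def field_simps add_pos_pos)
  have "V K > 0"
    using AK BA by (intro V_pos) simp
  define a where "a = - 1 / V K"
  have a: "a < 0" and aVK: "a * V K = -1"
    using \<open>V K > 0\<close> by (simp_all add: a_def)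
  have V_gt: "R < V x" if "B < \<bar>x\<bar>" for x
  proof -
    have "V 1 * (B - 1) < V 1 * (\<bar>x\<bar> - 1)"
      using that V_one_pos by simp
    then show ?thesis
      using V_ge_linear[of x] V_one_pos by (simp add: B_def)
  qed
  have V_ge: "2 * R \<le> V x" if "A \<le> \<bar>x\<bar>" for x
  proof -
    have "V 1 * (A - 1) \<le> V 1 * (\<bar>x\<bar> - 1)"
      using that V_one_pos by simp
    then show ?thesis
      using V_ge_linear[of x] V_one_pos by (simp add: A_def)
  qed
  have "(\<integral>x. - R * exp M * indicator {-B..B} x + R * exp (- M - 1) * indicator {A..K} x \<partial>lborel)
      = - R * exp M * (2 * B) + R * exp (- M - 1) * (K - A)"
    using integrable_const_indicator_Icc BA AK by simp
  also have "\<dots> = R * exp (- M - 1)"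
    by (simp add: K_def algebra_simps flip: exp_add)
  also have "\<dots> > 0"
    using R by simp
  finally have "0 < (\<integral>x. - R * exp M * indicator {-B..B} x + R * exp (- M - 1) * indicator {A..K} x \<partial>lborel)" .
  also have "\<dots> \<le> (\<integral>x. (V x - R) * exp (a * V x + apply_bcontfun l x) \<partial>lborel)"
    using orlicz_excess_integrand_ge_step[OF a R aVK BA V_gt V_ge]
    by (intro integral_mono Bochner_Integration.integrable_add integrable_const_indicator_Icc
        orlicz_moment_excess(1)[OF a]) (simp add: M_def)
  finally show ?thesis
    using orlicz_mean_greater_iff[OF a] a by blast
qed

lemma orlicz_excess_integrand_le_step:
  assumes R: "R > 0" and a: "a \<le> -1" and V_small: "\<And>x. \<bar>x\<bar> \<le> \<delta> \<Longrightarrow> V x \<le> R / 4"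
  shows "(V x - R) * exp (a * V x + apply_bcontfun l x)
    \<le> - (3 * R / 4) * exp (a * R / 4 - norm l) * indicator {-\<delta>..\<delta>} x
      + exp (norm l) * exp ((a + 1) * R / 2) * (V x * exp (- V x))"
proof -
  have l_bound: "- norm l \<le> apply_bcontfun l x" "apply_bcontfun l x \<le> norm l"
    using abs_apply_bcontfun_le[of l x] by linarith+
  consider "\<bar>x\<bar> \<le> \<delta>" | "\<not> \<bar>x\<bar> \<le> \<delta>" "V x \<le> R" | "\<not> \<bar>x\<bar> \<le> \<delta>" "V x > R"
    by linarith
  then show ?thesis
  proof cases
    case 1
    then have Vx: "V x \<le> R / 4"
      by (rule V_small)
    then have "a * (R / 4) \<le> a * V x"
      using a by (simp add: mult_left_mono_neg)
    then have E: "exp (a * R / 4 - norm l) \<le> exp (a * V x + apply_bcontfun l x)"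
      using l_bound by simp
    have "(V x - R) * exp (a * V x + apply_bcontfun l x) \<le> - (3 * R / 4) * exp (a * V x + apply_bcontfun l x)"
      using Vx by (intro mult_right_mono) auto
    also have "\<dots> \<le> - (3 * R / 4) * exp (a * R / 4 - norm l)"
      using E R by (intro mult_left_mono_neg) auto
    finally have "(V x - R) * exp (a * V x + apply_bcontfun l x) \<le> - (3 * R / 4) * exp (a * R / 4 - norm l)" .
    moreover have "0 \<le> exp (norm l) * exp ((a + 1) * R / 2) * (V x * exp (- V x))"
      by simp
    moreover have "indicator {-\<delta>..\<delta>} x = (1::real)"
      using 1 by (simp add: abs_le_iff)
    ultimately show ?thesis
      by (simp only: mult_1_right)
  next
    case 2
    then have "(V x - R) * exp (a * V x + apply_bcontfun l x) \<le> 0"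
      by (simp add: mult_nonpos_nonneg)
    moreover have "0 \<le> exp (norm l) * exp ((a + 1) * R / 2) * (V x * exp (- V x))"
      by simp
    moreover have "indicator {-\<delta>..\<delta>} x = (0::real)"
      using 2 by (auto simp: indicator_def abs_le_iff)
    ultimately show ?thesis
      by (simp only: mult_0_right add_0_left)
  next
    case 3
    have "(a + 1) * V x \<le> (a + 1) * (R / 2)"
      using 3 R a by (intro mult_left_mono_neg) auto
    moreover have "(a + 1) * V x = a * V x + V x" "(a + 1) * (R / 2) = (a + 1) * R / 2"
      by (simp_all add: algebra_simps)
    ultimately have "a * V x + apply_bcontfun l x \<le> norm l + (a + 1) * R / 2 + - V x"
      using l_bound by linarith
    then have "exp (a * V x + apply_bcontfun l x) \<le> exp (norm l) * exp ((a + 1) * R / 2) * exp (- V x)"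
      by (simp flip: exp_add)
    then have "(V x - R) * exp (a * V x + apply_bcontfun l x)
        \<le> V x * (exp (norm l) * exp ((a + 1) * R / 2) * exp (- V x))"
      using R by (intro mult_mono) auto
    moreover have "x \<notin> {-\<delta>..\<delta>}"
      using 3 by auto
    ultimately show ?thesis
      by (simp add: ac_simps)
  qed
qed

text \<open>With t = exp(a R / 4), the region where V \<le> R / 4 contributes at most a negative
  multiple of t and the rest at most a multiple of t^2, so the bound is negative for small t.\<close>

lemma orlicz_excess_integral_le:
  assumes R: "R > 0" and a: "a \<le> -1" and \<delta>: "\<delta> > 0"
    and V_small: "\<And>x. \<bar>x\<bar> \<le> \<delta> \<Longrightarrow> V x \<le> R / 4"
  shows "(\<integral>x. (V x - R) * exp (a * V x + apply_bcontfun l x) \<partial>lborel)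
    \<le> exp (a * R / 4) * (exp (norm l) * exp (R / 2) * (\<integral>x. V x * exp (- V x) \<partial>lborel) * exp (a * R / 4)
      - 3 * R / 2 * \<delta> * exp (- norm l))"
proof -
  have int: "integrable lborel (\<lambda>x. V x * exp (- V x))"
    using integrable_V_power_exp[of "-1" 1] by simp
  have "(\<integral>x. (V x - R) * exp (a * V x + apply_bcontfun l x) \<partial>lborel)
      \<le> (\<integral>x. - (3 * R / 4) * exp (a * R / 4 - norm l) * indicator {-\<delta>..\<delta>} x
          + exp (norm l) * exp ((a + 1) * R / 2) * (V x * exp (- V x)) \<partial>lborel)"
    using orlicz_excess_integrand_le_step[OF R a V_small] a
    by (intro integral_mono Bochner_Integration.integrable_add integrable_const_indicator_Icc
        orlicz_moment_excess(1) Bochner_Integration.integrable_mult_right int) simp_all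
  also have "\<dots> = - (3 * R / 4) * exp (a * R / 4 - norm l) * (2 * \<delta>)
      + exp (norm l) * exp ((a + 1) * R / 2) * (\<integral>x. V x * exp (- V x) \<partial>lborel)"
    using integrable_const_indicator_Icc int \<delta> by simp
  also have "\<dots> = exp (a * R / 4) * (exp (norm l) * exp (R / 2) * (\<integral>x. V x * exp (- V x) \<partial>lborel)
      * exp (a * R / 4) - 3 * R / 2 * \<delta> * exp (- norm l))"
    by (simp add: algebra_simps flip: exp_add)
  finally show ?thesis .
qed

lemma exists_orlicz_mean_less:
  assumes R: "R > 0"
  shows "\<exists>a<0. orlicz_mean V l a < R"
proof -
  define \<delta> where "\<delta> = min 1 (R / (4 * V 1))"
  have \<delta>: "\<delta> > 0"
    using R V_one_pos by (simp add: \<delta>_def)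
  have V_small: "V x \<le> R / 4" if "\<bar>x\<bar> \<le> \<delta>" for x
  proof -
    have "V x \<le> \<bar>x\<bar> * V 1"
      using that by (intro V_le_linear) (simp add: \<delta>_def)
    also have "\<dots> \<le> R / (4 * V 1) * V 1"
      using that V_one_pos by (intro mult_right_mono) (auto simp: \<delta>_def)
    finally show ?thesis
      using V_one_pos by simp
  qed
  define c1 where "c1 = 3 * R / 2 * \<delta> * exp (- norm l)"
  define c2 where "c2 = exp (norm l) * exp (R / 2) * (\<integral>x. V x * exp (- V x) \<partial>lborel)"
  have c1: "c1 > 0" and c2: "c2 \<ge> 0"
    using R \<delta> by (simp_all add: c1_def c2_def Bochner_Integration.integral_nonneg)
  define q where "q = c1 / (2 * (c2 + 1))"
  have q: "q > 0" and "c2 * q < c1"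
    using c1 c2 by (simp_all add: q_def field_simps add_nonneg_pos)
  define a where "a = min (-1) (4 / R * ln q)"
  have a: "a \<le> -1" "a < 0"
    by (simp_all add: a_def)
  have "a * R / 4 \<le> ln q"
    using R by (simp add: a_def min_def field_simps)
  then have t: "0 < exp (a * R / 4)" "exp (a * R / 4) \<le> q"
    using ln_ge_iff[OF q] by auto
  then have "c2 * exp (a * R / 4) < c1"
    using c2 \<open>c2 * q < c1\<close> by (smt (verit) mult_left_mono)
  then have "exp (a * R / 4) * (c2 * exp (a * R / 4) - c1) < 0"
    using t by (simp add: mult_pos_neg)
  then have "(\<integral>x. (V x - R) * exp (a * V x + apply_bcontfun l x) \<partial>lborel) < 0"
    using orlicz_excess_integral_le[OF R a(1) \<delta> V_small, of l] by (simp add: c1_def c2_def)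
  then show ?thesis
    using orlicz_mean_less_iff[OF a(2)] a by blast
qed

lemma orlicz_mean_mono: "a \<le> b \<Longrightarrow> b < 0 \<Longrightarrow> orlicz_mean V l a \<le> orlicz_mean V l b"
  using orlicz_mean_strict_mono[of a b l] by (cases "a = b") auto

lemma orlicz_mean_eq_ex1:
  assumes R: "R > 0"
  shows "\<exists>!a. a < 0 \<and> orlicz_mean V l a = R"
proof -
  obtain a1 where a1: "a1 < 0" "orlicz_mean V l a1 < R"
    using exists_orlicz_mean_less[OF R] by blast
  obtain a2 where a2: "a2 < 0" "orlicz_mean V l a2 > R"
    using exists_orlicz_mean_greater[OF R] by blast
  have "a1 \<le> a2"
    using orlicz_mean_mono[of a2 a1 l] a1 a2 by force
  moreover have "continuous_on {a1..a2} (orlicz_mean V l)"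
    using a2 by (intro continuous_on_subset[OF continuous_on_orlicz_mean]) auto
  ultimately obtain a where a: "a1 \<le> a" "a \<le> a2" "orlicz_mean V l a = R"
    using IVT'[of "orlicz_mean V l" a1 R a2] a1 a2 by auto
  show ?thesis
  proof (rule ex1I[of _ a])
    show "a < 0 \<and> orlicz_mean V l a = R"
      using a a2 by simp
    fix b
    assume "b < 0 \<and> orlicz_mean V l b = R"
    then show "b = a"
      using orlicz_mean_strict_mono[of a b l] orlicz_mean_strict_mono[of b a l] a a2
      by (cases a b rule: linorder_cases) auto
  qed
qed

lemma good_alpha_iff: "good_alpha V R l a \<longleftrightarrow> a < 0 \<and> orlicz_mean V l a = R"
proof
  assume "good_alpha V R l a"
  then have a: "a < 0" and "((\<lambda>b. phiV V b l) has_real_derivative R) (at a)"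
    by (auto simp: good_alpha_def)
  then show "a < 0 \<and> orlicz_mean V l a = R"
    using DERIV_unique[OF phiV_has_real_derivative[OF a]] by blast
next
  assume "a < 0 \<and> orlicz_mean V l a = R"
  then have a: "a < 0" and mean: "orlicz_mean V l a = R"
    by auto
  have "deriv (\<lambda>b. phiV V b l) b = orlicz_mean V l b" if "b \<in> {..<0}" for b
    using DERIV_imp_deriv[OF phiV_has_real_derivative] that by simp
  then have "(deriv (\<lambda>b. phiV V b l) has_real_derivative
      (orlicz_moment V 2 a l * orlicz_moment V 0 a l - (orlicz_moment V 1 a l)\<^sup>2) / (orlicz_moment V 0 a l)\<^sup>2) (at a)"
    using a by (intro has_field_derivative_transform_within_open[OF orlicz_mean_has_real_derivative[OF a],
          where S = "{..<0}"]) auto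
  then show "good_alpha V R l a"
    unfolding good_alpha_def
    using a mean phiV_has_real_derivative[OF a, of l] orlicz_mean_derivative_pos[OF a, of l] by auto
qed

lemma
  assumes "R > 0"
  shows alpha_of_neg: "alpha_of V R l < 0"
    and orlicz_mean_alpha_of: "orlicz_mean V l (alpha_of V R l) = R"
proof -
  have "\<exists>!a. good_alpha V R l a"
    using orlicz_mean_eq_ex1[OF assms] by (simp add: good_alpha_iff)
  then have "good_alpha V R l (alpha_of V R l)"
    unfolding alpha_of_def by (rule theI')
  then show "alpha_of V R l < 0" "orlicz_mean V l (alpha_of V R l) = R"
    by (simp_all add: good_alpha_iff)
qed

lemma alpha_of_between:
  assumes R: "R > 0" and "b1 < 0" "b2 < 0"
    and "orlicz_mean V l b1 < R" and "R < orlicz_mean V l b2"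
  shows "b1 < alpha_of V R l" and "alpha_of V R l < b2"
  using orlicz_mean_mono[of "alpha_of V R l" b1 l] orlicz_mean_mono[of b2 "alpha_of V R l" l]
    alpha_of_neg[OF R, of l] orlicz_mean_alpha_of[OF R, of l] assms
  by force+

lemma phiV_alpha_of_eq_Inf:
  assumes R: "R > 0"
  shows "phiV V (alpha_of V R l) l - alpha_of V R l * R = (INF a\<in>{..<0}. phiV V a l - a * R)"
proof -
  define a0 where "a0 = alpha_of V R l"
  have a0: "a0 < 0" "orlicz_mean V l a0 = R"
    using alpha_of_neg[OF R] orlicz_mean_alpha_of[OF R] by (simp_all add: a0_def)
  define f where "f = (\<lambda>b. phiV V b l - b * R)"
  have f_deriv: "(f has_real_derivative orlicz_mean V l b - R) (at b)" if "b < 0" for b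
    unfolding f_def
    by (rule DERIV_diff[OF phiV_has_real_derivative[OF that]]) (auto intro!: derivative_eq_intros)
  have f_cont: "continuous_on {p..q} f" if "q < 0" for p q
  proof (intro continuous_at_imp_continuous_on ballI)
    fix x
    assume "x \<in> {p..q}"
    with that show "isCont f x"
      by (intro DERIV_isCont[OF f_deriv]) auto
  qed
  have "f a0 \<le> f b" if b: "b < 0" for b
  proof (cases "b \<le> a0")
    case True
    show ?thesis
    proof (rule DERIV_nonpos_imp_decreasing_open[OF True _ f_cont[OF a0(1)]])
      fix x
      assume "b < x" "x < a0"
      then show "\<exists>y. (f has_real_derivative y) (at x) \<and> y \<le> 0"
        using f_deriv[of x] orlicz_mean_mono[of x a0 l] a0 by force
    qed
  next
    case False
    show ?thesis
    proof (rule DERIV_nonneg_imp_increasing_open[OF _ _ f_cont[OF b]])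
      fix x
      assume "a0 < x" "x < b"
      then show "\<exists>y. (f has_real_derivative y) (at x) \<and> y \<ge> 0"
        using f_deriv[of x] orlicz_mean_mono[of a0 x l] a0 b by force
    qed (use False in simp)
  qed
  then have "(INF a\<in>{..<0}. f a) = f a0"
    using a0 by (intro cInf_eq_minimum) auto
  then show ?thesis
    by (simp add: f_def a0_def)
qed

section \<open>Regularity of alpha and of the value function\<close>

lemma isCont_alpha_of:
  assumes R: "R > 0"
  shows "isCont (alpha_of V R) l0"
  unfolding continuous_at tendsto_iff
proof (intro allI impI)
  fix e :: real
  assume e: "e > 0"
  define a0 where "a0 = alpha_of V R l0"
  have a0: "a0 < 0" "orlicz_mean V l0 a0 = R"
    using alpha_of_neg[OF R] orlicz_mean_alpha_of[OF R] by (simp_all add: a0_def)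
  define \<epsilon> where "\<epsilon> = min (e / 2) (- a0 / 2)"
  have \<epsilon>: "\<epsilon> > 0" "\<epsilon> < e" "a0 - \<epsilon> < 0" "a0 + \<epsilon> < 0"
    using e a0 by (auto simp: \<epsilon>_def)
  have "orlicz_mean V l0 (a0 - \<epsilon>) < R" "R < orlicz_mean V l0 (a0 + \<epsilon>)"
    using orlicz_mean_strict_mono[of "a0 - \<epsilon>" a0 l0] orlicz_mean_strict_mono[of a0 "a0 + \<epsilon>" l0] a0 \<epsilon>
    by simp_all
  moreover have "isCont (\<lambda>l. orlicz_mean V l (a0 - \<epsilon>)) l0" "isCont (\<lambda>l. orlicz_mean V l (a0 + \<epsilon>)) l0"
    using \<epsilon> a0 by (simp_all add: isCont_orlicz_mean_lam)
  ultimately have "eventually (\<lambda>l. orlicz_mean V l (a0 - \<epsilon>) < R) (at l0)"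
      "eventually (\<lambda>l. R < orlicz_mean V l (a0 + \<epsilon>)) (at l0)"
    by (auto simp: isCont_def intro: order_tendstoD)
  then show "eventually (\<lambda>l. dist (alpha_of V R l) (alpha_of V R l0) < e) (at l0)"
  proof eventually_elim
    case (elim l)
    then have "a0 - \<epsilon> < alpha_of V R l" "alpha_of V R l < a0 + \<epsilon>"
      using alpha_of_between[OF R \<epsilon>(3,4)] by blast+
    then show ?case
      using \<epsilon> by (simp add: a0_def[symmetric] dist_real_def abs_less_iff)
  qed
qed

lemma alpha_of_has_derivative:
  assumes R: "R > 0"
  shows "\<exists>D. (alpha_of V R has_derivative D) (at l0)"
proof -
  define a0 where "a0 = alpha_of V R l0"
  have a0: "a0 < 0"
    using alpha_of_neg[OF R] by (simp add: a0_def)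
  define F where "F = (\<lambda>p. orlicz_moment V 1 (fst p) (snd p) - R * orlicz_moment V 0 (fst p) (snd p))"
  define c where "c = orlicz_moment V 2 a0 l0 - R * orlicz_moment V 1 a0 l0"
  define L where "L = (\<lambda>h. orlicz_moment_dir V 1 a0 l0 h - R * orlicz_moment_dir V 0 a0 l0 h)"
  have "(F has_derivative (\<lambda>p. c * fst p + L (snd p))) (at (alpha_of V R l0, l0))"
    unfolding F_def a0_def[symmetric]
    by (rule has_derivative_eq_rhs[OF has_derivative_diff[OF orlicz_moment_has_derivative[OF a0, of 1]
          has_derivative_mult_right[OF orlicz_moment_has_derivative[OF a0, of 0]]]])
      (simp add: fun_eq_iff c_def L_def numeral_2_eq_2 algebra_simps)
  moreover have zero: "F (alpha_of V R l, l) = 0" for l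
    using orlicz_mean_alpha_of[OF R, of l] orlicz_moment_zero_pos[OF alpha_of_neg[OF R, of l], of l]
    by (simp add: F_def orlicz_mean_def field_simps)
  moreover have "c \<noteq> 0"
  proof -
    have "c * orlicz_moment V 0 a0 l0
        = orlicz_moment V 2 a0 l0 * orlicz_moment V 0 a0 l0 - (orlicz_moment V 1 a0 l0)\<^sup>2"
      using zero[of l0] by (simp add: F_def c_def a0_def[symmetric] power2_eq_square algebra_simps)
    then show ?thesis
      using orlicz_moment_variance_pos[OF a0, of l0] by auto
  qed
  moreover have "bounded_linear L"
    unfolding L_def by (intro bounded_linear_sub bounded_linear_compose[OF bounded_linear_mult_right]
        bounded_linear_orlicz_moment_dir[OF a0])
  ultimately show ?thesis
    using implicit_function_has_derivative isCont_alpha_of[OF R] by blast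
qed

lemma phiV_alpha_of_differentiable:
  assumes R: "R > 0"
  shows "(\<lambda>mu. phiV V (alpha_of V R mu) mu) differentiable (at l0)"
proof -
  define a0 where "a0 = alpha_of V R l0"
  have a0: "a0 < 0"
    using alpha_of_neg[OF R] by (simp add: a0_def)
  obtain D where "(alpha_of V R has_derivative D) (at l0)"
    using alpha_of_has_derivative[OF R] by blast
  then have "((\<lambda>mu. (alpha_of V R mu, mu)) has_derivative (\<lambda>h. (D h, h))) (at l0)"
    by (intro has_derivative_Pair has_derivative_ident)
  then have "((\<lambda>p. orlicz_moment V 0 (fst p) (snd p)) \<circ> (\<lambda>mu. (alpha_of V R mu, mu)) has_derivative
      (\<lambda>p. fst p * orlicz_moment V 1 a0 l0 + orlicz_moment_dir V 0 a0 l0 (snd p)) \<circ> (\<lambda>h. (D h, h))) (at l0)"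
    using orlicz_moment_has_derivative[OF a0, of 0 l0] by (intro diff_chain_at) (simp_all add: a0_def)
  then have "(\<lambda>mu. orlicz_moment V 0 (alpha_of V R mu) mu) differentiable (at l0)"
    by (auto simp: o_def intro: differentiableI)
  moreover have "ln differentiable (at (orlicz_moment V 0 (alpha_of V R l0) l0))"
    using orlicz_moment_zero_pos[OF a0, of l0]
    by (intro differentiableI[OF has_field_derivative_imp_has_derivative[OF DERIV_ln_divide]])
      (simp add: a0_def)
  ultimately show ?thesis
    unfolding phiV_eq_ln_orlicz_moment by (rule differentiable_compose[of ln, rotated])
qed

end

theorem mainTheorem3:
  fixes V :: "real \<Rightarrow> real" and R :: real
  assumes "orlicz V" and "R > 0"
  shows "(\<forall>lam. \<exists>!a. good_alpha V R lam a)
    \<and> (\<forall>lam. (\<lambda>mu. phiV V (alpha_of V R mu) mu) differentiable (at lam))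
    \<and> (\<forall>lam. phiV V (alpha_of V R lam) lam - alpha_of V R lam * R
           = (INF a\<in>{..<0}. phiV V a lam - a * R))"
proof -
  interpret orlicz_function V
    using assms(1) by unfold_locales
  show ?thesis
    using orlicz_mean_eq_ex1[OF assms(2)] phiV_alpha_of_differentiable[OF assms(2)]
      phiV_alpha_of_eq_Inf[OF assms(2)]
    by (simp add: good_alpha_iff)
qed

end
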